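(* Let $D\subset\mathbb{R}^2$ be open, let $I\subset\mathbb{R}$ be an open interval, and let $\chi: D\times I\to\mathbb{R}^2$ be a $C^1$ map with $|\chi(x,t)|=1$ for all $(x,t)$. Let $R=\begin{bmatrix}0&-1\\1&0\end{bmatrix}$, write $\chi^{\perp}=R\chi$, let $\nabla\cdot\chi$ denote the divergence of $\chi(\cdot,t)$ with respect to $x$, and let $\partial_t\chi$ denote the partial derivative in $t$ at fixed $x$. Let $x:\mathbb{R}\times I\to D$, $(s,t)\mapsto x(s,t)$, be a $C^1$ map whose partial derivatives $\partial_s x$ and $\partial_t x$ are themselves $C^1$, and which satisfies $$\partial_s x(s,t)=\chi(x(s,t),t)\qquad\text{for all }(s,t).$$ Assume there is a $C^1$ function $\sigma:I\to(0,\infty)$ such that $x(s+\sigma(t),t)=x(s,t)$ for all $s,t$; thus for each $t$ the curve $s\mapsto x(s,t)$ is a closed, arclength-parametrized orbit of period $\sigma(t)$ of the direction field $\chi(\cdot,t)$. Assume further that $$\rho_2(t):=\exp\Big(\int_0^{\sigma(t)}\nabla\cdot\chi(x(\vartheta,t),t)\,d\vartheta\Big)\neq 1\qquad\text{for all } t\in I.$$ Define $$\psi(s,t):=\big\langle \chi^{\perp}(x(s,t),t),\,\partial_t\chi(x(s,t),t)\big\rangle,$$ $$\Pi^{\perp}(s,t):=\int_0^s \exp\Big(\int_\vartheta^s \nabla\cdot\chi(x(\tau,t),t)\,d\tau\Big)\,\psi(\vartheta,t)\,d\vartheta,$$ and let $$N(s,t):=\big\langle \partial_t x(s,t),\,\chi^{\perp}(x(s,t),t)\big\rangle$$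 be the normal velocity of the curve family. Then for all $s\in\mathbb{R}$ and $t\in I$, $$N(s,t)=\exp\Big(\int_0^s\nabla\cdot\chi(x(\vartheta,t),t)\,d\vartheta\Big)\,N(0,t)+\Pi^{\perp}(s,t),$$ and $$N(0,t)=\frac{\Pi^{\perp}(\sigma(t),t)}{1-\rho_2(t)}.$$ Moreover, suppose in addition that $\mu\in\mathbb{R}$ is a constant and $S: D\times I\to\mathbb{R}^{2\times 2}$ is a $C^1$ map with symmetric values such that $\langle\chi,(S-\mu I)\chi\rangle=0$ on $D\times I$. Then at every point $(x(s,t),t)$ where $\langle\chi,S\chi^{\perp}\rangle\neq0$, $$\psi(s,t)=-\frac{\langle\chi,\partial_tS\,\chi\rangle}{2\langle\chi,S\chi^{\perp}\rangle},$$ where $\chi$, $\chi^{\perp}$, $S$ and $\partial_t S$ are all evaluated at $(x(s,t),t)$.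
   Context: In the paper, the direction field is $\chi=\chi_\mu^{\pm}$, built from the eigenvalues $s_1\le s_2$ and unit eigenvectors $e_1$, $e_2=Re_1$ of the rate-of-strain tensor $S=\tfrac12(\nabla v+\nabla v^\top)$ of a planar unsteady velocity field $v(x,t)$: $$\chi_\mu^{\pm}=\sqrt{\tfrac{s_2-\mu}{s_2-s_1}}\,e_1\pm\sqrt{\tfrac{\mu-s_1}{s_2-s_1}}\,e_2 .$$ This field satisfies $\langle\chi,(S-\mu I)\chi\rangle=0$. Closed orbits (limit cycles) of such a field are called elliptic objective Eulerian coherent structures (OECSs). The pointwise material flux density through the moving curve is $$\varphi(x(s,t),t)=\langle v(x(s,t),t),\chi^\perp(x(s,t),t)\rangle-N(s,t).$$ The condition $\rho_2\neq1$ expresses hyperbolicity of the limit cycle: $\rho_2$ is its nontrivial Floquet multiplier. *)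

theory Defs
  imports "HOL-Analysis.Analysis"
begin

definition C1_on :: "'a::real_normed_vector set \<Rightarrow> ('a \<Rightarrow> 'b::real_normed_vector) \<Rightarrow> bool" where
  "C1_on S f \<longleftrightarrow> (\<exists>f' :: 'a \<Rightarrow> ('a \<Rightarrow>\<^sub>L 'b).
      (\<forall>z\<in>S. (f has_derivative blinfun_apply (f' z)) (at z)) \<and> continuous_on S f')"

definition oint :: "real \<Rightarrow> real \<Rightarrow> (real \<Rightarrow> real) \<Rightarrow> real" where
  "oint a b f = (if a \<le> b then integral {a..b} f else - integral {b..a} f)"

definition Rmat :: "real^2^2" where
  "Rmat = vector [vector [0, -1], vector [1, 0]]"

definition perp :: "real^2 \<Rightarrow> real^2" where
  "perp v = Rmat *v v"

definition divergence :: "(real^2 \<Rightarrow> real^2) \<Rightarrow> real^2 \<Rightarrow> real" where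
  "divergence F y = trace (jacobian F (at y))"

end

theory Submission
  imports Defs
begin

text \<open>Along each orbit the normal velocity \<open>N = \<langle>\<partial>\<^sub>t x, \<chi>\<^sup>\<perp>\<rangle>\<close> obeys the scalar linear
  equation \<open>\<partial>\<^sub>s N = (\<nabla>\<cdot>\<chi>) N + \<psi>\<close>: the mixed partials of \<open>x\<close> commute, and in the plane the
  derivative of \<open>\<chi>\<^sup>\<perp>\<close> contributes exactly the trace of \<open>\<nabla>\<chi>\<close>. Variation of constants gives the
  formula for \<open>N(s, t)\<close>. Since the orbit closes, \<open>N(\<sigma>(t), t) = N(0, t)\<close>, and \<open>\<rho>\<^sub>2 \<noteq> 1\<close> lets us
  solve for \<open>N(0, t)\<close>. The expression for \<open>\<psi>\<close> comes from differentiating the constraints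
  \<open>|\<chi>| = 1\<close> and \<open>\<langle>\<chi>, S \<chi>\<rangle> = \<mu>\<close> in \<open>t\<close>.\<close>

lemma has_derivative_partial_fst:
  assumes "((\<lambda>(u, v). F u v) has_derivative L) (at (a, b))"
  shows "((\<lambda>u. F u b) has_derivative (\<lambda>h. L (h, 0))) (at a)"
proof -
  have "((\<lambda>u. (u, b)) has_derivative (\<lambda>h. (h, 0))) (at a)"
    by (auto intro!: derivative_eq_intros)
  from has_derivative_compose[OF this assms] show ?thesis
    by (simp add: o_def)
qed

lemma has_derivative_partial_snd:
  assumes "((\<lambda>(u, v). F u v) has_derivative L) (at (a, b))"
  shows "((\<lambda>v. F a v) has_derivative (\<lambda>h. L (0, h))) (at b)"
proof -
  have "((\<lambda>v. (a, v)) has_derivative (\<lambda>h. (0, h))) (at b)"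
    by (auto intro!: derivative_eq_intros)
  from has_derivative_compose[OF this assms] show ?thesis
    by (simp add: o_def)
qed

lemma has_vector_derivative_partial_fst:
  fixes F :: "real \<Rightarrow> 'b::real_normed_vector \<Rightarrow> 'c::real_normed_vector"
  assumes "((\<lambda>(u, v). F u v) has_derivative L) (at (a, b))"
  shows "((\<lambda>u. F u b) has_vector_derivative L (1, 0)) (at a)"
proof -
  have "L (h, 0) = h *\<^sub>R L (1, 0)" for h
    using linear_scale[OF has_derivative_linear[OF assms], of h "(1, 0)"] by simp
  then have "(\<lambda>h. L (h, 0)) = (\<lambda>h. h *\<^sub>R L (1, 0))"
    by (intro ext)
  with has_derivative_partial_fst[OF assms] show ?thesis
    unfolding has_vector_derivative_def by simp
qed

lemma has_vector_derivative_partial_snd: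
  fixes F :: "'a::real_normed_vector \<Rightarrow> real \<Rightarrow> 'c::real_normed_vector"
  assumes "((\<lambda>(u, v). F u v) has_derivative L) (at (a, b))"
  shows "((\<lambda>v. F a v) has_vector_derivative L (0, 1)) (at b)"
proof -
  have "L (0, h) = h *\<^sub>R L (0, 1)" for h
    using linear_scale[OF has_derivative_linear[OF assms], of h "(0, 1)"] by simp
  then have "(\<lambda>h. L (0, h)) = (\<lambda>h. h *\<^sub>R L (0, 1))"
    by (intro ext)
  with has_derivative_partial_snd[OF assms] show ?thesis
    unfolding has_vector_derivative_def by simp
qed

lemma C1_on_partial_snd_differentiable:
  assumes "C1_on (A \<times> B) (\<lambda>(y, t). F y t)" "y \<in> A" "t \<in> B"
  shows "(\<lambda>r. F y r) differentiable (at t)"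
  using assms has_derivative_partial_snd unfolding C1_on_def differentiable_def by blast

lemma has_vector_derivative_compose_has_derivative:
  assumes "(f has_vector_derivative f') (at x)" and "(g has_derivative L) (at (f x))"
  shows "((\<lambda>y. g (f y)) has_vector_derivative L f') (at x)"
  using vector_derivative_diff_chain_within[OF assms(1) has_derivative_at_withinI[OF assms(2)]]
  by (simp add: o_def)

lemma bounded_bilinear_matrix_vector_mult:
  "bounded_bilinear (\<lambda>(A::real^'n^'m) (v::real^'n). A *v v)"
proof -
  have "bilinear (\<lambda>(A::real^'n^'m) (v::real^'n). A *v v)"
    unfolding bilinear_def
    by (simp add: linearI matrix_vector_mult_add_rdistrib matrix_vector_right_distrib
        matrix_vector_mult_scaleR scaleR_matrix_vector_assoc)
  then show ?thesis
    by (simp add: bilinear_conv_bounded_bilinear)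
qed

lemma perp_nth: "perp c $ 1 = - (c $ 2)" "perp c $ 2 = c $ 1"
  by (simp_all add: perp_def Rmat_def matrix_vector_mult_def sum_2)

lemma inner_vec_2: "(u::real^2) \<bullet> v = u$1 * v$1 + u$2 * v$2"
  by (simp add: inner_vec_def sum_2)

lemma matrix_vector_mult_nth_2:
  "((A::real^2^2) *v v) $ 1 = A$1$1 * v$1 + A$1$2 * v$2"
  "((A::real^2^2) *v v) $ 2 = A$2$1 * v$1 + A$2$2 * v$2"
  by (simp_all add: matrix_vector_mult_def sum_2)

lemma trace_2: "trace (A::real^2^2) = A$1$1 + A$2$2"
  by (simp add: trace_def sum_2)

lemma bounded_linear_perp: "bounded_linear perp"
  using matrix_vector_mul_bounded_linear[of Rmat] by (simp add: perp_def[abs_def])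

lemma inner_perp_self: "perp c \<bullet> c = 0" "c \<bullet> perp c = 0"
  unfolding inner_vec_2 perp_nth by algebra+

lemma unit_perp_decomposition:
  assumes "(c::real^2) \<bullet> c = 1"
  shows "v = (v \<bullet> c) *\<^sub>R c + (v \<bullet> perp c) *\<^sub>R perp c"
proof -
  have "c$1 * c$1 + c$2 * c$2 = 1" using assms unfolding inner_vec_2 .
  then show ?thesis
    unfolding vec_eq_iff forall_2 vector_add_component vector_scaleR_component inner_vec_2 perp_nth
      real_scaleR_def
    by algebra
qed

lemma inner_perp_trace:
  fixes A :: "real^2^2" and v c :: "real^2"
  shows "(A *v v) \<bullet> perp c + v \<bullet> perp (A *v c) = trace A * (v \<bullet> perp c)"
  unfolding inner_vec_2 perp_nth matrix_vector_mult_nth_2 trace_2 by algebra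

lemma trace_matrix_2:
  fixes L :: "real^2 \<Rightarrow> real^2"
  shows "trace (matrix L) = L (axis 1 1) $ 1 + L (axis 2 1) $ 2"
  by (simp add: trace_2 matrix_def)

lemma oint_fundamental_theorem:
  fixes f F :: "real \<Rightarrow> real"
  assumes "\<And>s. (F has_real_derivative f s) (at s)"
  shows "oint a b f = F b - F a"
proof -
  have "integral {p..q} f = F q - F p" if "p \<le> q" for p q
    using fundamental_theorem_of_calculus[OF that] assms
    by (metis has_real_derivative_iff_has_vector_derivative has_field_derivative_at_within
        integral_unique)
  then show ?thesis
    unfolding oint_def by (simp add: less_imp_le)
qed

lemma oint_has_real_derivative_upper:
  fixes f :: "real \<Rightarrow> real"
  assumes f: "continuous_on UNIV f"
  shows "((\<lambda>s. oint a s f) has_real_derivative f s0) (at s0)"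
proof -
  define c where "c = min a s0 - 1"
  have int: "f integrable_on {p..q}" for p q
    by (rule integrable_continuous_real) (rule continuous_on_subset[OF f], auto)
  have "((\<lambda>s. integral {c..s} f) has_real_derivative f s0) (at s0 within {c..max a s0 + 1})"
    by (rule integral_has_real_derivative[OF continuous_on_subset[OF f]]) (auto simp: c_def)
  moreover have "at s0 within {c..max a s0 + 1} = at s0"
    by (rule at_within_Icc_at) (auto simp: c_def)
  ultimately have "((\<lambda>s. integral {c..s} f - integral {c..a} f) has_real_derivative f s0) (at s0)"
    by (auto intro!: derivative_eq_intros)
  then show ?thesis
  proof (rule has_field_derivative_transform_within_open[where S="{c<..}"])
    fix s assume "s \<in> {c<..}"
    moreover have "c \<le> a" by (simp add: c_def)
    ultimately show "integral {c..s} f - integral {c..a} f = oint a s f"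
      using Henstock_Kurzweil_Integration.integral_combine[OF _ _ int, of c a s]
        Henstock_Kurzweil_Integration.integral_combine[OF _ _ int, of c s a]
      by (cases "a \<le> s") (auto simp: oint_def)
  qed (auto simp: c_def)
qed

lemma oint_diff_base:
  fixes f :: "real \<Rightarrow> real"
  assumes "continuous_on UNIV f"
  shows "oint a b f = oint 0 b f - oint 0 a f"
  by (rule oint_fundamental_theorem[OF oint_has_real_derivative_upper[OF assms]])

lemma oint_cmult: "oint a b (\<lambda>x. c * g x) = c * oint a b g"
  by (simp add: oint_def)

lemma linear_ode_solution:
  fixes N d p :: "real \<Rightarrow> real"
  assumes dN: "\<And>s. (N has_real_derivative (d s * N s + p s)) (at s)"
    and d: "continuous_on UNIV d" and p: "continuous_on UNIV p"
  shows "N s = exp (oint 0 s d) * N 0 + oint 0 s (\<lambda>\<theta>. exp (oint \<theta> s d) * p \<theta>)"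
proof -
  define \<Phi> where "\<Phi> s = oint 0 s d" for s
  have d\<Phi>: "(\<Phi> has_real_derivative d s) (at s)" for s
    unfolding \<Phi>_def by (rule oint_has_real_derivative_upper[OF d])
  then have "continuous_on UNIV \<Phi>"
    by (meson DERIV_continuous continuous_at_imp_continuous_on)
  define q where "q \<theta> = exp (- \<Phi> \<theta>) * p \<theta>" for \<theta>
  have q: "continuous_on UNIV q"
    unfolding q_def by (intro continuous_intros \<open>continuous_on UNIV \<Phi>\<close> p)
  define K where "K s = N s * exp (- \<Phi> s) - oint 0 s q" for s
  have "(K has_real_derivative 0) (at s)" for s
    unfolding K_def
    by (rule derivative_eq_intros dN d\<Phi> oint_has_real_derivative_upper[OF q] refl)+
       (simp add: q_def algebra_simps)
  then have "K s = K 0"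
    by (intro DERIV_isconst_all) auto
  then have N: "N s = exp (\<Phi> s) * N 0 + exp (\<Phi> s) * oint 0 s q"
    by (simp add: K_def \<Phi>_def oint_def exp_minus field_simps)
  have "exp (oint \<theta> s d) * p \<theta> = exp (\<Phi> s) * q \<theta>" for \<theta>
    using oint_diff_base[OF d, of \<theta> s]
    by (simp add: \<Phi>_def q_def exp_diff exp_minus divide_inverse)
  then have "oint 0 s (\<lambda>\<theta>. exp (oint \<theta> s d) * p \<theta>) = exp (\<Phi> s) * oint 0 s q"
    by (simp add: oint_cmult)
  with N show ?thesis
    by (simp add: \<Phi>_def)
qed

text \<open>Symmetry of mixed partials in integrated form: \<open>X(b,t) - X(a,t) = \<integral>\<^sub>a\<^sup>b \<partial>\<^sub>sX\<close>
  is differentiated in \<open>t\<close> under the integral sign (Leibniz rule), which only needs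
  continuity of the mixed derivative \<open>G = \<partial>\<^sub>t\<partial>\<^sub>sX\<close>.\<close>
lemma has_vector_derivative_mixed_partial:
  fixes X Y F G :: "real \<Rightarrow> real \<Rightarrow> 'a::banach"
  assumes I: "open I" "convex I" "t \<in> I"
    and Xs: "\<And>s t. t \<in> I \<Longrightarrow> ((\<lambda>r. X r t) has_vector_derivative F s t) (at s)"
    and Xt: "\<And>s t. t \<in> I \<Longrightarrow> ((\<lambda>r. X s r) has_vector_derivative Y s t) (at t)"
    and Ft: "\<And>s t. t \<in> I \<Longrightarrow> ((\<lambda>r. F s r) has_vector_derivative G s t) (at t)"
    and G: "continuous_on (UNIV \<times> I) (\<lambda>(s, t). G s t)"
  shows "((\<lambda>s. Y s t) has_vector_derivative G s0 t) (at s0)"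
proof -
  have F_integral: "((\<lambda>r. F r t') has_integral X b t' - X a t') {a..b}"
    if "a \<le> b" "t' \<in> I" for a b t'
    using fundamental_theorem_of_calculus[OF that(1)] Xs[OF that(2)]
    by (meson has_vector_derivative_at_within)
  have Y_increment: "Y b t - Y a t = integral {a..b} (\<lambda>r. G r t)" if "a \<le> b" for a b
  proof -
    have "((\<lambda>t'. integral (cbox a b) (\<lambda>r. F r t')) has_vector_derivative
        integral (cbox a b) (\<lambda>r. G r t)) (at t within I)"
    proof (rule leibniz_rule_vector_derivative[where f="\<lambda>t' r. F r t'"])
      have "prod.swap ` (I \<times> cbox a b) \<subseteq> UNIV \<times> I"
        by auto
      then show "continuous_on (I \<times> cbox a b) (\<lambda>(t', r). G r t')"
        using continuous_on_compose2[OF G continuous_on_swap] by (simp add: case_prod_beta')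
    qed (use F_integral[OF that] Ft I in \<open>auto intro: has_vector_derivative_at_within\<close>)
    then have "((\<lambda>t'. X b t' - X a t') has_vector_derivative integral {a..b} (\<lambda>r. G r t)) (at t)"
      using at_within_open[OF I(3,1)] integral_unique[OF F_integral[OF that]]
      by (auto simp: cbox_interval
          intro: has_vector_derivative_transform_within_open[OF _ I(1,3)])
    moreover have "((\<lambda>t'. X b t' - X a t') has_vector_derivative Y b t - Y a t) (at t)"
      by (intro derivative_intros Xt I)
    ultimately show ?thesis
      using vector_derivative_unique_at by blast
  qed
  define a where "a = s0 - 1"
  have "continuous_on {a..s0 + 1} (\<lambda>r. (r, t))" "(\<lambda>r. (r, t)) ` {a..s0 + 1} \<subseteq> UNIV \<times> I"
    using I by (auto intro: continuous_intros)
  then have "continuous_on {a..s0 + 1} (\<lambda>r. G r t)"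
    using continuous_on_compose2[OF G] by fastforce
  then have "((\<lambda>u. integral {a..u} (\<lambda>r. G r t)) has_vector_derivative G s0 t) (at s0)"
    using integral_has_vector_derivative[of a "s0 + 1" "\<lambda>r. G r t" s0]
      at_within_Icc_at[of a s0 "s0 + 1"]
    by (simp add: a_def)
  then have "((\<lambda>u. Y a t + integral {a..u} (\<lambda>r. G r t)) has_vector_derivative G s0 t) (at s0)"
    by (auto intro!: derivative_eq_intros)
  then show ?thesis
    by (rule has_vector_derivative_transform_within_open[where S="{a<..}"])
      (auto simp: a_def Y_increment[symmetric])
qed

text \<open>Differentiating \<open>|c|\<^sup>2 = 1\<close> forces \<open>c' = \<psi> c\<^sup>\<perp>\<close>; differentiating
  \<open>\<langle>c, S c\<rangle> = \<mu>\<close> and using the symmetry of \<open>S\<close> then gives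
  \<open>2 \<psi> \<langle>c, S c\<^sup>\<perp>\<rangle> + \<langle>c, S' c\<rangle> = 0\<close>.\<close>
lemma inner_perp_derivative_of_constrained_unit_vector:
  fixes c :: "real \<Rightarrow> real^2" and S :: "real \<Rightarrow> real^2^2"
  assumes T: "open T" "t \<in> T"
    and c': "(c has_vector_derivative c') (at t)" and S': "(S has_vector_derivative S') (at t)"
    and unit: "\<And>r. r \<in> T \<Longrightarrow> norm (c r) = 1"
    and constraint: "\<And>r. r \<in> T \<Longrightarrow> c r \<bullet> ((S r - \<mu> *\<^sub>R mat 1) *v c r) = 0"
    and sym: "transpose (S t) = S t"
    and nondeg: "c t \<bullet> (S t *v perp (c t)) \<noteq> 0"
  shows "perp (c t) \<bullet> c' = - (c t \<bullet> (S' *v c t)) / (2 * (c t \<bullet> (S t *v perp (c t))))"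
proof -
  have cc: "c r \<bullet> c r = 1" if "r \<in> T" for r
    using unit[OF that] by (simp add: norm_eq_1)
  have cSc: "c r \<bullet> (S r *v c r) = \<mu>" if "r \<in> T" for r
    using constraint[OF that] cc[OF that]
    by (simp add: matrix_vector_mult_diff_rdistrib inner_diff_right
        flip: scaleR_matrix_vector_assoc)
  have "((\<lambda>r. c r \<bullet> c r) has_vector_derivative c t \<bullet> c' + c' \<bullet> c t) (at t)"
    using bounded_bilinear.has_vector_derivative[OF bounded_bilinear_inner c' c'] .
  moreover have "((\<lambda>r. c r \<bullet> c r) has_vector_derivative 0) (at t)"
    by (rule has_vector_derivative_transform_within_open[OF has_vector_derivative_const T])
      (simp add: cc)
  ultimately have "c t \<bullet> c' = 0"
    using vector_derivative_unique_at by (fastforce simp: inner_commute)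
  define w where "w = perp (c t) \<bullet> c'"
  have c'_perp: "c' = w *\<^sub>R perp (c t)"
    using unit_perp_decomposition[OF cc[OF T(2)], of c'] \<open>c t \<bullet> c' = 0\<close>
    by (simp add: w_def inner_commute)
  have "((\<lambda>r. c r \<bullet> (S r *v c r)) has_vector_derivative
      c t \<bullet> (S t *v c' + S' *v c t) + c' \<bullet> (S t *v c t)) (at t)"
    using bounded_bilinear.has_vector_derivative[OF bounded_bilinear_inner c'
        bounded_bilinear.has_vector_derivative[OF bounded_bilinear_matrix_vector_mult S' c']] .
  moreover have "((\<lambda>r. c r \<bullet> (S r *v c r)) has_vector_derivative 0) (at t)"
    by (rule has_vector_derivative_transform_within_open[OF has_vector_derivative_const T])
      (simp add: cSc)
  ultimately have "c t \<bullet> (S t *v c' + S' *v c t) + c' \<bullet> (S t *v c t) = 0"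
    using vector_derivative_unique_at by blast
  moreover have "perp (c t) \<bullet> (S t *v c t) = c t \<bullet> (S t *v perp (c t))"
    by (metis sym dot_lmul_matrix transpose_matrix_vector inner_commute)
  ultimately have "2 * w * (c t \<bullet> (S t *v perp (c t))) + c t \<bullet> (S' *v c t) = 0"
    unfolding c'_perp by (simp add: inner_add_right matrix_vector_mult_scaleR algebra_simps)
  with nondeg show ?thesis
    by (simp add: w_def field_simps)
qed

lemma inner_perp_partial_t_of_unit_field:
  fixes chi :: "real^2 \<Rightarrow> real \<Rightarrow> real^2" and S :: "real^2 \<Rightarrow> real \<Rightarrow> real^2^2"
  assumes "open I" and "y \<in> D" "t \<in> I"
    and chi: "C1_on (D \<times> I) (\<lambda>(y, t). chi y t)" and unit: "\<forall>y\<in>D. \<forall>t\<in>I. norm (chi y t) = 1"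
    and S: "C1_on (D \<times> I) (\<lambda>(y, t). S y t)" and sym: "\<forall>y\<in>D. \<forall>t\<in>I. transpose (S y t) = S y t"
    and constraint: "\<forall>y\<in>D. \<forall>t\<in>I. chi y t \<bullet> ((S y t - \<mu> *\<^sub>R mat 1) *v chi y t) = 0"
    and nondeg: "chi y t \<bullet> (S y t *v perp (chi y t)) \<noteq> 0"
  shows "perp (chi y t) \<bullet> vector_derivative (\<lambda>r. chi y r) (at t) =
    - (chi y t \<bullet> (vector_derivative (\<lambda>r. S y r) (at t) *v chi y t)) / (2 * (chi y t \<bullet> (S y t *v perp (chi y t))))"
proof (rule inner_perp_derivative_of_constrained_unit_vector[where \<mu> = \<mu>, OF \<open>open I\<close> \<open>t \<in> I\<close>])
  show "((\<lambda>r. chi y r) has_vector_derivative vector_derivative (\<lambda>r. chi y r) (at t)) (at t)"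
    using C1_on_partial_snd_differentiable[OF chi \<open>y \<in> D\<close> \<open>t \<in> I\<close>] vector_derivative_works by blast
  show "((\<lambda>r. S y r) has_vector_derivative vector_derivative (\<lambda>r. S y r) (at t)) (at t)"
    using C1_on_partial_snd_differentiable[OF S \<open>y \<in> D\<close> \<open>t \<in> I\<close>] vector_derivative_works by blast
qed (use assms in auto)

definition normal_velocity ::
    "(real^2 \<Rightarrow> real \<Rightarrow> real^2) \<Rightarrow> (real \<Rightarrow> real \<Rightarrow> real^2) \<Rightarrow> real \<Rightarrow> real \<Rightarrow> real"
  where "normal_velocity chi x s t = vector_derivative (\<lambda>r. x s r) (at t) \<bullet> perp (chi (x s t) t)"

definition rotation_rate ::
    "(real^2 \<Rightarrow> real \<Rightarrow> real^2) \<Rightarrow> (real \<Rightarrow> real \<Rightarrow> real^2) \<Rightarrow> real \<Rightarrow> real \<Rightarrow> real"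
  where "rotation_rate chi x s t = perp (chi (x s t) t) \<bullet> vector_derivative (\<lambda>r. chi (x s t) r) (at t)"

locale integral_curve_family =
  fixes D :: "(real^2) set" and I :: "real set"
    and chi :: "real^2 \<Rightarrow> real \<Rightarrow> real^2"
    and Dchi :: "(real^2) \<times> real \<Rightarrow> ((real^2) \<times> real) \<Rightarrow>\<^sub>L (real^2)"
    and x :: "real \<Rightarrow> real \<Rightarrow> real^2"
    and Dx :: "real \<times> real \<Rightarrow> (real \<times> real) \<Rightarrow>\<^sub>L (real^2)"
  assumes open_I: "open I" and convex_I: "convex I"
    and chi_deriv: "\<And>z. z \<in> D \<times> I \<Longrightarrow> ((\<lambda>(y, t). chi y t) has_derivative Dchi z) (at z)"
    and Dchi_cont: "continuous_on (D \<times> I) Dchi"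
    and x_in_D: "\<And>s t. t \<in> I \<Longrightarrow> x s t \<in> D"
    and x_deriv: "\<And>z. z \<in> UNIV \<times> I \<Longrightarrow> ((\<lambda>(s, t). x s t) has_derivative Dx z) (at z)"
    and Dx_cont: "continuous_on (UNIV \<times> I) Dx"
    and x_integral_curve: "\<And>s t. t \<in> I \<Longrightarrow> vector_derivative (\<lambda>r. x r t) (at s) = chi (x s t) t"
begin

lemma Dx_1_0: "t \<in> I \<Longrightarrow> Dx (s, t) (1, 0) = chi (x s t) t"
  using x_integral_curve vector_derivative_at has_vector_derivative_partial_fst[OF x_deriv]
  by (metis SigmaI UNIV_I)

lemma x_partial_s: "t \<in> I \<Longrightarrow> ((\<lambda>r. x r t) has_vector_derivative chi (x s t) t) (at s)"
  using has_vector_derivative_partial_fst[OF x_deriv] Dx_1_0 by fastforce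

lemma x_partial_t: "t \<in> I \<Longrightarrow> ((\<lambda>r. x s r) has_vector_derivative Dx (s, t) (0, 1)) (at t)"
  using has_vector_derivative_partial_snd[OF x_deriv] by blast

lemma vector_derivative_x_partial_t: "t \<in> I \<Longrightarrow> vector_derivative (\<lambda>r. x s r) (at t) = Dx (s, t) (0, 1)"
  by (rule vector_derivative_at[OF x_partial_t])

lemma chi_partial_y:
  "y \<in> D \<Longrightarrow> t \<in> I \<Longrightarrow> ((\<lambda>y. chi y t) has_derivative (\<lambda>h. Dchi (y, t) (h, 0))) (at y)"
  using has_derivative_partial_fst[OF chi_deriv] by blast

lemma chi_partial_t:
  "y \<in> D \<Longrightarrow> t \<in> I \<Longrightarrow> ((\<lambda>r. chi y r) has_vector_derivative Dchi (y, t) (0, 1)) (at t)"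
  using has_vector_derivative_partial_snd[OF chi_deriv] by blast

lemma chi_along_x_partial_t:
  assumes "t \<in> I"
  shows "((\<lambda>r. chi (x s r) r) has_vector_derivative Dchi (x s t, t) (Dx (s, t) (0, 1), 1)) (at t)"
proof -
  have "((\<lambda>r. (x s r, r)) has_vector_derivative (Dx (s, t) (0, 1), 1)) (at t)"
    by (intro has_vector_derivative_Pair x_partial_t assms has_vector_derivative_id)
  from has_vector_derivative_compose_has_derivative[OF this chi_deriv] show ?thesis
    using assms x_in_D by simp
qed

lemma chi_along_x_partial_s:
  "t \<in> I \<Longrightarrow> ((\<lambda>s. chi (x s t) t) has_vector_derivative Dchi (x s t, t) (chi (x s t) t, 0)) (at s)"
  using has_vector_derivative_compose_has_derivative[OF x_partial_s chi_partial_y[OF x_in_D]] .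

lemma continuous_on_x: "continuous_on (UNIV \<times> I) (\<lambda>(s, t). x s t)"
  using x_deriv has_derivative_continuous
  by (blast intro: continuous_at_imp_continuous_on)

lemma continuous_on_Dchi_along_x: "continuous_on (UNIV \<times> I) (\<lambda>(s, t). Dchi (x s t, t))"
proof -
  have "continuous_on (UNIV \<times> I) (\<lambda>(s, t). (x s t, t))"
    using continuous_on_x by (auto simp: case_prod_beta' intro!: continuous_intros)
  moreover have "(\<lambda>(s, t). (x s t, t)) ` (UNIV \<times> I) \<subseteq> D \<times> I"
    using x_in_D by auto
  ultimately show ?thesis
    using continuous_on_compose2[OF Dchi_cont] by (simp add: case_prod_beta')
qed

lemma x_partial_t_partial_s:
  assumes "t \<in> I"
  shows "((\<lambda>s. Dx (s, t) (0, 1)) has_vector_derivative Dchi (x s t, t) (Dx (s, t) (0, 1), 1)) (at s)"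
proof (rule has_vector_derivative_mixed_partial[where X = x and F = "\<lambda>s t. chi (x s t) t", OF open_I convex_I assms])
  show "continuous_on (UNIV \<times> I) (\<lambda>(s, t). Dchi (x s t, t) (Dx (s, t) (0, 1), 1))"
    using continuous_on_Dchi_along_x Dx_cont
    by (auto simp: case_prod_beta' intro!: continuous_intros)
qed (use x_partial_s x_partial_t chi_along_x_partial_t in auto)

lemma divergence_chi:
  assumes "y \<in> D" "t \<in> I"
  shows "divergence (\<lambda>y. chi y t) y = trace (matrix (\<lambda>h. Dchi (y, t) (h, 0)))"
  unfolding divergence_def jacobian_def frechet_derivative_at[OF chi_partial_y[OF assms], symmetric] ..

text \<open>\<open>\<partial>\<^sub>s N = \<langle>\<partial>\<^sub>s\<partial>\<^sub>t x, \<chi>\<^sup>\<perp>\<rangle> + \<langle>\<partial>\<^sub>t x, (\<nabla>\<chi> \<chi>)\<^sup>\<perp>\<rangle>\<close> with \<open>\<partial>\<^sub>s\<partial>\<^sub>t x = \<nabla>\<chi> \<partial>\<^sub>t x + \<partial>\<^sub>t\<chi>\<close>;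
  in the plane \<open>\<langle>A v, c\<^sup>\<perp>\<rangle> + \<langle>v, (A c)\<^sup>\<perp>\<rangle> = tr A \<langle>v, c\<^sup>\<perp>\<rangle>\<close>.\<close>
lemma normal_velocity_partial_s:
  assumes t: "t \<in> I"
  shows "((\<lambda>s. normal_velocity chi x s t) has_real_derivative
    divergence (\<lambda>y. chi y t) (x s t) * normal_velocity chi x s t + rotation_rate chi x s t) (at s)"
proof -
  define y where "y = x s t"
  define c where "c = chi y t"
  define v where "v = Dx (s, t) (0, 1)"
  have y: "y \<in> D" using x_in_D t by (simp add: y_def)
  define M where "M = matrix (\<lambda>h. Dchi (y, t) (h, 0))"
  have M: "M *v h = Dchi (y, t) (h, 0)" for h
    using matrix_vector_mul(3)[OF has_derivative_bounded_linear[OF chi_partial_y[OF y t]]]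
    by (simp add: M_def)
  have "((\<lambda>s. chi (x s t) t) has_vector_derivative M *v c) (at s)"
    using chi_along_x_partial_s[OF t] by (simp add: y_def c_def M)
  then have "((\<lambda>s. perp (chi (x s t) t)) has_vector_derivative perp (M *v c)) (at s)"
    by (rule has_vector_derivative_compose_has_derivative[OF _
          bounded_linear_imp_has_derivative[OF bounded_linear_perp]])
  from bounded_bilinear.has_vector_derivative[OF bounded_bilinear_inner x_partial_t_partial_s[OF t] this]
  have "((\<lambda>s. Dx (s, t) (0, 1) \<bullet> perp (chi (x s t) t)) has_vector_derivative
      v \<bullet> perp (M *v c) + Dchi (y, t) (v, 1) \<bullet> perp c) (at s)"
    by (simp add: y_def c_def v_def)
  also have "Dchi (y, t) (v, 1) = M *v v + Dchi (y, t) (0, 1)"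
    by (simp add: M flip: blinfun.add_right)
  also have "v \<bullet> perp (M *v c) + (M *v v + Dchi (y, t) (0, 1)) \<bullet> perp c
      = ((M *v v) \<bullet> perp c + v \<bullet> perp (M *v c)) + perp c \<bullet> Dchi (y, t) (0, 1)"
    by (simp add: inner_add_left inner_add_right inner_commute)
  also have "\<dots> = trace M * (v \<bullet> perp c) + perp c \<bullet> Dchi (y, t) (0, 1)"
    by (simp only: inner_perp_trace)
  finally have "((\<lambda>s. Dx (s, t) (0, 1) \<bullet> perp (chi (x s t) t)) has_vector_derivative
      trace M * (v \<bullet> perp c) + perp c \<bullet> Dchi (y, t) (0, 1)) (at s)" .
  moreover have "divergence (\<lambda>y. chi y t) (x s t) = trace M"
    unfolding M_def y_def by (rule divergence_chi[OF x_in_D[OF t] t])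
  ultimately show ?thesis
    using vector_derivative_at[OF chi_partial_t[OF y t]] vector_derivative_x_partial_t[OF t]
    by (simp add: normal_velocity_def rotation_rate_def has_real_derivative_iff_has_vector_derivative
        y_def c_def v_def)
qed

lemma continuous_on_Dchi_along_orbit:
  assumes "t \<in> I"
  shows "continuous_on UNIV (\<lambda>s. Dchi (x s t, t))"
proof -
  have "continuous_on UNIV (\<lambda>s. (s, t))" "range (\<lambda>s. (s, t)) \<subseteq> UNIV \<times> I"
    using assms by (auto intro: continuous_intros)
  then show ?thesis
    using continuous_on_compose2[OF continuous_on_Dchi_along_x] by fastforce
qed

lemma continuous_on_divergence_along_orbit:
  "t \<in> I \<Longrightarrow> continuous_on UNIV (\<lambda>s. divergence (\<lambda>y. chi y t) (x s t))"
  using continuous_on_Dchi_along_orbit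
  by (auto simp: divergence_chi x_in_D trace_matrix_2 intro!: continuous_intros)

lemma continuous_on_rotation_rate:
  assumes "t \<in> I"
  shows "continuous_on UNIV (\<lambda>s. rotation_rate chi x s t)"
proof -
  have "continuous_on UNIV (\<lambda>s. chi (x s t) t)"
    using chi_along_x_partial_s[OF assms] has_vector_derivative_continuous
    by (blast intro: continuous_at_imp_continuous_on)
  then have "continuous_on UNIV (\<lambda>s. perp (chi (x s t) t) \<bullet> Dchi (x s t, t) (0, 1))"
    using continuous_on_Dchi_along_orbit[OF assms]
    by (intro continuous_intros bounded_linear.continuous_on[OF bounded_linear_perp])
  then show ?thesis
    using vector_derivative_at[OF chi_partial_t[OF x_in_D[OF assms] assms]]
    by (simp add: rotation_rate_def)
qed

lemma normal_velocity_variation_of_constants: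
  assumes "t \<in> I"
  shows "normal_velocity chi x s t = exp (oint 0 s (\<lambda>\<theta>. divergence (\<lambda>y. chi y t) (x \<theta> t))) * normal_velocity chi x 0 t
    + oint 0 s (\<lambda>\<theta>. exp (oint \<theta> s (\<lambda>\<tau>. divergence (\<lambda>y. chi y t) (x \<tau> t))) * rotation_rate chi x \<theta> t)"
  by (rule linear_ode_solution[OF normal_velocity_partial_s[OF assms]
        continuous_on_divergence_along_orbit[OF assms] continuous_on_rotation_rate[OF assms]])

text \<open>Differentiating \<open>x(\<sigma>(t), t) = x(0, t)\<close> in \<open>t\<close> shows that \<open>\<partial>\<^sub>t x\<close> at the two ends differs
  by a multiple of the tangent \<open>\<chi>\<close>, which is invisible to the normal velocity.\<close>
lemma normal_velocity_at_return:
  assumes t: "t \<in> I" and \<sigma>: "\<sigma> differentiable (at t)"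
    and closes: "\<And>t'. t' \<in> I \<Longrightarrow> x (\<sigma> t') t' = x 0 t'"
  shows "normal_velocity chi x (\<sigma> t) t = normal_velocity chi x 0 t"
proof -
  define \<sigma>' where "\<sigma>' = vector_derivative \<sigma> (at t)"
  have "((\<lambda>t'. (\<sigma> t', t')) has_vector_derivative (\<sigma>', 1)) (at t)"
    using \<sigma> unfolding \<sigma>'_def vector_derivative_works
    by (intro has_vector_derivative_Pair has_vector_derivative_id)
  from has_vector_derivative_compose_has_derivative[OF this x_deriv[of "(\<sigma> t, t)"]]
  have "((\<lambda>t'. x (\<sigma> t') t') has_vector_derivative Dx (\<sigma> t, t) (\<sigma>', 1)) (at t)"
    using t by simp
  also have "Dx (\<sigma> t, t) (\<sigma>', 1) = \<sigma>' *\<^sub>R Dx (\<sigma> t, t) (1, 0) + Dx (\<sigma> t, t) (0, 1)"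
    by (simp flip: blinfun.scaleR_right blinfun.add_right)
  finally have "((\<lambda>t'. x (\<sigma> t') t') has_vector_derivative
      \<sigma>' *\<^sub>R chi (x 0 t) t + Dx (\<sigma> t, t) (0, 1)) (at t)"
    using Dx_1_0[OF t] closes[OF t] by simp
  moreover have "((\<lambda>t'. x (\<sigma> t') t') has_vector_derivative Dx (0, t) (0, 1)) (at t)"
    by (rule has_vector_derivative_transform_within_open[OF x_partial_t[OF t] open_I t])
      (simp add: closes)
  ultimately have "Dx (\<sigma> t, t) (0, 1) = Dx (0, t) (0, 1) - \<sigma>' *\<^sub>R chi (x 0 t) t"
    using vector_derivative_unique_at by (fastforce simp: algebra_simps)
  then show ?thesis
    using closes[OF t]
    by (simp add: normal_velocity_def vector_derivative_x_partial_t[OF t] inner_diff_left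
        inner_perp_self)
qed

lemma normal_velocity_at_zero_of_closed_orbit:
  assumes t: "t \<in> I" and \<sigma>: "\<sigma> differentiable (at t)"
    and closes: "\<And>t'. t' \<in> I \<Longrightarrow> x (\<sigma> t') t' = x 0 t'"
    and hyperbolic: "exp (oint 0 (\<sigma> t) (\<lambda>\<theta>. divergence (\<lambda>y. chi y t) (x \<theta> t))) \<noteq> 1"
  shows "normal_velocity chi x 0 t =
    oint 0 (\<sigma> t) (\<lambda>\<theta>. exp (oint \<theta> (\<sigma> t) (\<lambda>\<tau>. divergence (\<lambda>y. chi y t) (x \<tau> t))) * rotation_rate chi x \<theta> t)
    / (1 - exp (oint 0 (\<sigma> t) (\<lambda>\<theta>. divergence (\<lambda>y. chi y t) (x \<theta> t))))"
  using normal_velocity_variation_of_constants[OF t, of "\<sigma> t"] normal_velocity_at_return[OF t \<sigma> closes] hyperbolic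
  by (simp add: field_simps)

end

theorem mainTheorem1:
  fixes D :: "(real^2) set" and I :: "real set"
    and chi :: "real^2 \<Rightarrow> real \<Rightarrow> real^2"
    and x :: "real \<Rightarrow> real \<Rightarrow> real^2"
    and \<sigma> :: "real \<Rightarrow> real"
  assumes D_open: "open D"
    and I_open: "open I" and I_interval: "is_interval I"
    and chi_C1: "C1_on (D \<times> I) (\<lambda>(y, t). chi y t)"
    and chi_unit: "\<forall>y\<in>D. \<forall>t\<in>I. norm (chi y t) = 1"
    and x_in_D: "\<forall>s. \<forall>t\<in>I. x s t \<in> D"
    and x_C1: "C1_on (UNIV \<times> I) (\<lambda>(s, t). x s t)"
    and xs_C1: "C1_on (UNIV \<times> I) (\<lambda>(s, t). vector_derivative (\<lambda>r. x r t) (at s))"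
    and xt_C1: "C1_on (UNIV \<times> I) (\<lambda>(s, t). vector_derivative (\<lambda>r. x s r) (at t))"
    and x_orbit: "\<forall>s. \<forall>t\<in>I. vector_derivative (\<lambda>r. x r t) (at s) = chi (x s t) t"
    and \<sigma>_C1: "C1_on I \<sigma>"
    and \<sigma>_pos: "\<forall>t\<in>I. \<sigma> t > 0"
    and x_periodic: "\<forall>s. \<forall>t\<in>I. x (s + \<sigma> t) t = x s t"
    and hyperbolic: "\<forall>t\<in>I. exp (oint 0 (\<sigma> t) (\<lambda>\<theta>. divergence (\<lambda>y. chi y t) (x \<theta> t))) \<noteq> 1"
  shows
    "(let \<rho>\<^sub>2 = (\<lambda>t. exp (oint 0 (\<sigma> t) (\<lambda>\<theta>. divergence (\<lambda>y. chi y t) (x \<theta> t))));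
          \<psi> = (\<lambda>s t. perp (chi (x s t) t) \<bullet> vector_derivative (\<lambda>r. chi (x s t) r) (at t));
          PiPerp = (\<lambda>s t. oint 0 s (\<lambda>\<theta>. exp (oint \<theta> s (\<lambda>\<tau>. divergence (\<lambda>y. chi y t) (x \<tau> t))) * \<psi> \<theta> t));
          N = (\<lambda>s t. vector_derivative (\<lambda>r. x s r) (at t) \<bullet> perp (chi (x s t) t))
      in (\<forall>s. \<forall>t\<in>I.
            N s t = exp (oint 0 s (\<lambda>\<theta>. divergence (\<lambda>y. chi y t) (x \<theta> t))) * N 0 t + PiPerp s t)
       \<and> (\<forall>t\<in>I. N 0 t = PiPerp (\<sigma> t) t / (1 - \<rho>\<^sub>2 t))
       \<and> (\<forall>(\<mu>::real) (S :: real^2 \<Rightarrow> real \<Rightarrow> real^2^2).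
            C1_on (D \<times> I) (\<lambda>(y, t). S y t)
            \<and> (\<forall>y\<in>D. \<forall>t\<in>I. transpose (S y t) = S y t)
            \<and> (\<forall>y\<in>D. \<forall>t\<in>I. chi y t \<bullet> ((S y t - \<mu> *\<^sub>R mat 1) *v chi y t) = 0)
            \<longrightarrow> (\<forall>s. \<forall>t\<in>I.
                  chi (x s t) t \<bullet> (S (x s t) t *v perp (chi (x s t) t)) \<noteq> 0 \<longrightarrow>
                  \<psi> s t = - (chi (x s t) t \<bullet> (vector_derivative (\<lambda>r. S (x s t) r) (at t) *v chi (x s t) t))
                           / (2 * (chi (x s t) t \<bullet> (S (x s t) t *v perp (chi (x s t) t)))))))"
proof -
  obtain Dchi where "\<And>z. z \<in> D \<times> I \<Longrightarrow> ((\<lambda>(y, t). chi y t) has_derivative blinfun_apply (Dchi z)) (at z)"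
      "continuous_on (D \<times> I) Dchi"
    using chi_C1 unfolding C1_on_def by blast
  moreover obtain Dx where "\<And>z. z \<in> UNIV \<times> I \<Longrightarrow> ((\<lambda>(s, t). x s t) has_derivative blinfun_apply (Dx z)) (at z)"
      "continuous_on (UNIV \<times> I) Dx"
    using x_C1 unfolding C1_on_def by blast
  ultimately interpret integral_curve_family D I chi Dchi x Dx
    using I_open I_interval x_in_D x_orbit by unfold_locales (auto simp: is_interval_convex)
  have \<sigma>_differentiable: "\<sigma> differentiable (at t)" if "t \<in> I" for t
    using \<sigma>_C1 that unfolding C1_on_def differentiable_def by blast
  have closes: "x (\<sigma> t) t = x 0 t" if "t \<in> I" for t
    using x_periodic that by (metis add_0)
  show ?thesis
    unfolding Let_def
    apply (intro conjI)
    subgoal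
      using normal_velocity_variation_of_constants[unfolded normal_velocity_def rotation_rate_def] by blast
    subgoal
      using normal_velocity_at_zero_of_closed_orbit[OF _ \<sigma>_differentiable closes,
          unfolded normal_velocity_def rotation_rate_def] hyperbolic
      by blast
    subgoal
      by (intro allI impI ballI, elim conjE)
        (rule inner_perp_partial_t_of_unit_field[OF I_open x_in_D[rule_format] _ chi_C1 chi_unit]; assumption)
    done
qed

end
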